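(* Let $G=(V,E)$ be a graph, let $\mathbb L=\{1,\dots,L\}\subset V$ be a set of training nodes with class labels $y_l\in\{1,\dots,K\}$, and fix a bandwidth $\sigma>0$. For any two nodes $i,j$, let $\mathbf d_i=(d_{i1},\dots,d_{iL})$ and $\mathbf d_j=(d_{j1},\dots,d_{jL})$ be their shortest-path distances to the training nodes. If $d_{il}\ge d_{jl}$ for all $l\in\{1,\dots,L\}$, then $\hat u_{v_i}\ge \hat u_{v_j}$, where $\hat u_{v}$ denotes the GKDE vacuity defined in the context.
   Context: Graph-based Kernel Dirichlet distribution Estimation (GKDE): let $g(d)=\frac{1}{\sigma\sqrt{2\pi}}\exp\!\big(-\frac{d^2}{2\sigma^2}\big)$. For a node $m$ and training node $l$, define $\mathbf h(y_l,d_{ml})=(h_1,\dots,h_K)$ with $h_k=g(d_{ml})$ if $y_l=k$ and $h_k=0$ otherwise, where $d_{ml}$ is the shortest-path distance between $m$ and $l$. The prior evidence of node $m$ is $\hat{\mathbf e}_m=\sum_{l\in\mathbb L}\mathbf h(y_l,d_{ml})=(\hat e_{m1},\dots,\hat e_{mK})$, the prior Dirichlet parameter is $\hat{\boldsymbol\alpha}_m=\hat{\mathbf e}_m+\mathbf 1$, and the GKDE vacuity of node $m$ is $\hat u_{v_m}=\frac{K}{\sum_{k=1}^K\hat\alpha_{mk}}=\frac{K}{\sum_{k=1}^K \hat e_{mk}+K}$. *)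

theory Defs
  imports Complex_Main "HOL-Library.Extended_Nat"
begin

fun walk :: "('a \<Rightarrow> 'a \<Rightarrow> bool) \<Rightarrow> nat \<Rightarrow> 'a \<Rightarrow> 'a \<Rightarrow> bool" where
  "walk E 0 i j = (i = j)"
| "walk E (Suc n) i j = (\<exists>k. E i k \<and> walk E n k j)"

definition spdist :: "('a \<Rightarrow> 'a \<Rightarrow> bool) \<Rightarrow> 'a \<Rightarrow> 'a \<Rightarrow> enat" where
  "spdist E i j = (if \<exists>n. walk E n i j then enat (LEAST n. walk E n i j) else \<infinity>)"

text \<open>Gaussian kernel g(d); g(infinity) = 0 (the limit).\<close>
definition gker :: "real \<Rightarrow> enat \<Rightarrow> real" where
  "gker \<sigma> d = (case d of enat n \<Rightarrow> 1 / (\<sigma> * sqrt (2 * pi)) * exp (- ((real n)\<^sup>2) / (2 * \<sigma>\<^sup>2))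
                          | \<infinity> \<Rightarrow> 0)"

definition hvec :: "real \<Rightarrow> nat \<Rightarrow> enat \<Rightarrow> nat \<Rightarrow> real" where
  "hvec \<sigma> yl d k = (if yl = k then gker \<sigma> d else 0)"

definition gkde_evidence :: "('a \<Rightarrow> 'a \<Rightarrow> bool) \<Rightarrow> 'a set \<Rightarrow> ('a \<Rightarrow> nat) \<Rightarrow> real \<Rightarrow> 'a \<Rightarrow> nat \<Rightarrow> real" where
  "gkde_evidence E Ltr y \<sigma> m k = (\<Sum>l\<in>Ltr. hvec \<sigma> (y l) (spdist E m l) k)"

definition gkde_alpha :: "('a \<Rightarrow> 'a \<Rightarrow> bool) \<Rightarrow> 'a set \<Rightarrow> ('a \<Rightarrow> nat) \<Rightarrow> real \<Rightarrow> 'a \<Rightarrow> nat \<Rightarrow> real" where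
  "gkde_alpha E Ltr y \<sigma> m k = gkde_evidence E Ltr y \<sigma> m k + 1"

definition gkde_vacuity :: "('a \<Rightarrow> 'a \<Rightarrow> bool) \<Rightarrow> 'a set \<Rightarrow> ('a \<Rightarrow> nat) \<Rightarrow> nat \<Rightarrow> real \<Rightarrow> 'a \<Rightarrow> real" where
  "gkde_vacuity E Ltr y K \<sigma> m = real K / (\<Sum>k=1..K. gkde_alpha E Ltr y \<sigma> m k)"

end

theory Submission
  imports Defs
begin

(* The Gaussian kernel decreases with distance, so node i, being farther than j from every
   training node, receives componentwise less evidence. Hence its Dirichlet strength
   (sum of the alphas) is smaller, and since both strengths are at least K, the vacuity
   K / strength is larger. *)

lemma gker_nonneg: "\<sigma> > 0 \<Longrightarrow> 0 \<le> gker \<sigma> d"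
  by (cases d) (auto simp: gker_def)

lemma gker_antimono:
  assumes "\<sigma> > 0" and "d \<le> d'"
  shows "gker \<sigma> d' \<le> gker \<sigma> d"
proof (cases d')
  case infinity
  then show ?thesis using gker_nonneg[OF assms(1)] by (simp add: gker_def)
next
  case (enat n')
  then obtain n where d: "d = enat n" and "n \<le> n'"
    using assms(2) by (cases d) auto
  then have "- ((real n')\<^sup>2) / (2 * \<sigma>\<^sup>2) \<le> - ((real n)\<^sup>2) / (2 * \<sigma>\<^sup>2)"
    using assms(1) by (intro divide_right_mono) (auto intro: power_mono)
  then show ?thesis
    using enat d assms(1) by (simp add: gker_def divide_right_mono)
qed

lemma gkde_evidence_nonneg: "\<sigma> > 0 \<Longrightarrow> 0 \<le> gkde_evidence E Ltr y \<sigma> m k"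
  unfolding gkde_evidence_def hvec_def by (intro sum_nonneg) (simp add: gker_nonneg)

lemma gkde_evidence_antimono:
  assumes "\<sigma> > 0" and "\<And>l. l \<in> Ltr \<Longrightarrow> spdist E j l \<le> spdist E i l"
  shows "gkde_evidence E Ltr y \<sigma> i k \<le> gkde_evidence E Ltr y \<sigma> j k"
  unfolding gkde_evidence_def hvec_def
  by (intro sum_mono) (simp add: gker_antimono assms)

lemma gkde_strength_ge_K:
  "\<sigma> > 0 \<Longrightarrow> real K \<le> (\<Sum>k=1..K. gkde_alpha E Ltr y \<sigma> m k)"
  using sum_mono[of "{1..K}" "\<lambda>_. 1::real" "gkde_alpha E Ltr y \<sigma> m"]
  by (simp add: gkde_alpha_def gkde_evidence_nonneg)

lemma gkde_strength_antimono:
  assumes "\<sigma> > 0" and "\<And>l. l \<in> Ltr \<Longrightarrow> spdist E j l \<le> spdist E i l"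
  shows "(\<Sum>k=1..K. gkde_alpha E Ltr y \<sigma> i k) \<le> (\<Sum>k=1..K. gkde_alpha E Ltr y \<sigma> j k)"
  unfolding gkde_alpha_def by (intro sum_mono) (simp add: gkde_evidence_antimono assms)

lemma divide_nat_antimono:
  fixes S S' :: real
  assumes "real K \<le> S" and "S \<le> S'"
  shows "real K / S' \<le> real K / S"
  using assms by (cases "K = 0") (auto intro: divide_left_mono)

theorem proposition1:
  fixes V :: "'a set" and E :: "'a \<Rightarrow> 'a \<Rightarrow> bool" and Ltr :: "'a set"
    and y :: "'a \<Rightarrow> nat" and K :: nat and \<sigma> :: real and i j :: 'a
  assumes "finite V"
    and "\<And>u v. E u v \<Longrightarrow> u \<in> V \<and> v \<in> V"
    and "\<And>u v. E u v \<Longrightarrow> E v u"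
    and "Ltr \<subseteq> V"
    and "\<And>l. l \<in> Ltr \<Longrightarrow> y l \<in> {1..K}"
    and "\<sigma> > 0"
    and "i \<in> V" and "j \<in> V"
    and "\<And>l. l \<in> Ltr \<Longrightarrow> spdist E i l \<ge> spdist E j l"
  shows "gkde_vacuity E Ltr y K \<sigma> i \<ge> gkde_vacuity E Ltr y K \<sigma> j"
  unfolding gkde_vacuity_def
  using assms(6,9)
  by (intro divide_nat_antimono gkde_strength_ge_K gkde_strength_antimono)

end
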